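(* Let $1\le n\le L$. If $q_i=p_i$ for all $i$, then $$Z_{L,n}=\binom{L-1}{n-1}\,e_{n-1}(p_1,\dots,p_n)^{L-n},$$ where $e_{n-1}$ is the elementary symmetric polynomial of degree $n-1$.
   Context: Particle labels are taken modulo $n$. $\Omega_{L,n}$ is the set of words $w_1\cdots w_L$ on the ring $\mathbb{Z}/L\mathbb{Z}$ over the alphabet $\{\bullet_1,\dots,\bullet_n,\Box_1,\dots,\Box_n\}$ in which each $\bullet_k$ occurs exactly once, the $\bullet_1,\dots,\bullet_n$ appear in this cyclic order, and the remaining $L-n$ letters are arbitrary $\Box_i$'s. For $w\in\Omega_{L,n}$ let $b_k$ be the position of $\bullet_k$ and $C_k$ the set of positions strictly between $b_k$ and $b_{k+1}$ going cyclically forward ($b_{n+1}=b_1$). For $i,k\in\{1,\dots,n\}$ set $w_\Box(i,k)=p_1\cdots p_{i-1}q_{i+1}\cdots q_kp_{k+1}\cdots p_n$ if $i\le k$ and $w_\Box(i,k)=q_1\cdots q_kp_{k+1}\cdots p_{i-1}q_{i+1}\cdots q_n$ if $k<i$ (empty products are $1$). The weight is $\mathrm{wt}(w)=\prod_{k=1}^n\prod_{j\in C_k}w_\Box(i_j,k)$ where $w_j=\Box_{i_j}$. The restricted partition function is $Z_{L,n}=\sum\mathrm{wt}(w)$, the sum over $w\in\Omega_{L,n}$ with $w_1=\bullet_1$; it is a polynomial in $p_1,\dots,p_n,q_1,\dots,q_n$, and the claim is about its specialization. *)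

theory Defs
  imports Main "HOL-Library.FuncSet"
begin

text \<open>Letters: Bullet k is the particle of species k, Box i is the box letter with label i.
  Positions of a word on the ring Z/LZ are represented by 1..L.\<close>

datatype letter = Bullet nat | Box nat

fun boxlabel :: "letter \<Rightarrow> nat" where
  "boxlabel (Box i) = i"
| "boxlabel (Bullet k) = 0"

definition letters :: "nat \<Rightarrow> letter set" where
  "letters n = Bullet ` {1..n} \<union> Box ` {1..n}"

definition nxt :: "nat \<Rightarrow> nat \<Rightarrow> nat" where
  "nxt n k = k mod n + 1"

definition bpos :: "nat \<Rightarrow> (nat \<Rightarrow> letter) \<Rightarrow> nat \<Rightarrow> nat" where
  "bpos L w k = (THE j. j \<in> {1..L} \<and> w j = Bullet k)"

text \<open>The bullets 1..n appear in this cyclic order: the cyclic sequence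
  b_1, b_2, ..., b_n, b_1 has at most one (weak) descent.\<close>
definition cyc_ordered :: "nat \<Rightarrow> nat \<Rightarrow> (nat \<Rightarrow> letter) \<Rightarrow> bool" where
  "cyc_ordered L n w \<longleftrightarrow>
     card {k \<in> {1..n}. bpos L w (nxt n k) \<le> bpos L w k} \<le> 1"

definition Omega :: "nat \<Rightarrow> nat \<Rightarrow> (nat \<Rightarrow> letter) set" where
  "Omega L n = {w \<in> {1..L} \<rightarrow>\<^sub>E letters n.
      (\<forall>k\<in>{1..n}. card {j \<in> {1..L}. w j = Bullet k} = 1) \<and> cyc_ordered L n w}"

definition cdist :: "nat \<Rightarrow> nat \<Rightarrow> nat \<Rightarrow> int" where
  "cdist L a j = (int j - int a) mod int L"

definition cyc_between :: "nat \<Rightarrow> nat \<Rightarrow> nat \<Rightarrow> nat set" where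
  "cyc_between L a c = {j \<in> {1..L}. 0 < cdist L a j \<and>
      cdist L a j < (if c = a then int L else cdist L a c)}"

definition Cset :: "nat \<Rightarrow> nat \<Rightarrow> (nat \<Rightarrow> letter) \<Rightarrow> nat \<Rightarrow> nat set" where
  "Cset L n w k = cyc_between L (bpos L w k) (bpos L w (nxt n k))"

definition wbox :: "(nat \<Rightarrow> 'a::comm_ring_1) \<Rightarrow> (nat \<Rightarrow> 'a) \<Rightarrow> nat \<Rightarrow> nat \<Rightarrow> nat \<Rightarrow> 'a" where
  "wbox p q n i k =
     (if i \<le> k then (\<Prod>j\<in>{1..<i}. p j) * (\<Prod>j\<in>{i<..k}. q j) * (\<Prod>j\<in>{k<..n}. p j)
      else (\<Prod>j\<in>{1..k}. q j) * (\<Prod>j\<in>{k<..<i}. p j) * (\<Prod>j\<in>{i<..n}. q j))"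

definition wt :: "nat \<Rightarrow> nat \<Rightarrow> (nat \<Rightarrow> 'a::comm_ring_1) \<Rightarrow> (nat \<Rightarrow> 'a) \<Rightarrow> (nat \<Rightarrow> letter) \<Rightarrow> 'a" where
  "wt L n p q w = (\<Prod>k\<in>{1..n}. \<Prod>j\<in>Cset L n w k. wbox p q n (boxlabel (w j)) k)"

definition Zres :: "nat \<Rightarrow> nat \<Rightarrow> (nat \<Rightarrow> 'a::comm_ring_1) \<Rightarrow> (nat \<Rightarrow> 'a) \<Rightarrow> 'a" where
  "Zres L n p q = (\<Sum>w\<in>{w \<in> Omega L n. w 1 = Bullet 1}. wt L n p q w)"

definition esym :: "nat \<Rightarrow> (nat \<Rightarrow> 'a::comm_ring_1) \<Rightarrow> nat \<Rightarrow> 'a" where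
  "esym m x n = (\<Sum>S\<in>{S. S \<subseteq> {1..n} \<and> card S = m}. \<Prod>i\<in>S. x i)"

end

theory Submission
  imports Defs "HOL-Library.Infinite_Set" "HOL-Library.Disjoint_Sets"
begin

text \<open>For q = p the box weight w_Box(i,k) = \<Prod>j\<noteq>i. p_j no longer depends on the block k,
  so wt(w) is a product of one such factor per box position. Once w_1 = Bullet_1, the cyclic
  order forces the bullets to sit at increasing positions 1 = b_1 < ... < b_n. Hence a word
  amounts to an n-set T \<subseteq> {1..L} containing 1 together with an arbitrary labelling of the
  L - n other positions by {1..n}. For fixed T the labellings contribute
  (\<Sum>i. \<Prod>j\<noteq>i. p_j)^(L-n) = e_(n-1)^(L-n), and there are C(L-1, n-1) sets T.\<close>

section \<open>Strictly increasing enumerations\<close>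

definition rank :: "nat set \<Rightarrow> nat \<Rightarrow> nat" where
  "rank T j = card {x \<in> T. x \<le> j}"

lemma rank_strict_mono_on_image:
  assumes e: "strict_mono_on {1..n} e" and k: "k \<in> {1..n}"
  shows "rank (e ` {1..n}) (e k) = k"
proof -
  have "{x \<in> e ` {1..n}. x \<le> e k} = e ` {1..k}"
    using k strict_mono_on_less_eq[OF e] by fastforce
  moreover have "inj_on e {1..k}"
    using k by (intro strict_mono_on_imp_inj_on monotone_on_subset[OF e]) auto
  ultimately show ?thesis
    unfolding rank_def by (simp add: card_image)
qed

lemma obtain_strict_mono_on_enumeration:
  fixes T :: "nat set"
  assumes "finite T"
  obtains e where "strict_mono_on {1..card T} e" "e ` {1..card T} = T"
proof -
  obtain h where h: "bij_betw h {..<card T} T" "strict_mono_on {..<card T} h"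
    using ex_bij_betw_strict_mono_card[OF assms] by blast
  have "strict_mono_on {1..card T} (\<lambda>k. h (k - 1))"
  proof (rule strict_mono_onI)
    fix r s assume "r \<in> {1..card T}" "s \<in> {1..card T}" "r < s"
    then show "h (r - 1) < h (s - 1)" using strict_mono_onD[OF h(2)] by simp
  qed
  moreover have "(\<lambda>k. h (k - 1)) ` {1..card T} = h ` {..<card T}"
    by (force simp: image_iff Bex_def intro: exI[of _ "Suc _"])
  ultimately show thesis
    using that h(1) by (simp add: bij_betw_def)
qed

lemma strict_mono_on_atLeastAtMost_SucI:
  fixes f :: "nat \<Rightarrow> 'a::order"
  assumes "\<And>k. a \<le> k \<Longrightarrow> k < b \<Longrightarrow> f k < f (Suc k)"
  shows "strict_mono_on {a..b} f"
proof (rule strict_mono_onI)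
  fix r s assume rs: "r \<in> {a..b}" "s \<in> {a..b}" "r < s"
  from \<open>r < s\<close> have "Suc r \<le> s" by simp
  then show "f r < f s"
  proof (induction s rule: dec_induct)
    case base then show ?case using assms rs by simp
  next
    case (step m) then show ?case using assms[of m] rs by force
  qed
qed

lemma UN_gaps_strict_mono_on:
  fixes e :: "nat \<Rightarrow> nat"
  assumes "strict_mono_on {1..Suc n} e"
  shows "(\<Union>k\<in>{1..n}. {e k<..<e (Suc k)}) = {e 1..<e (Suc n)} - e ` {1..n}"
  using assms
proof (induction n)
  case 0 then show ?case by simp
next
  case (Suc n)
  have IH: "(\<Union>k\<in>{1..n}. {e k<..<e (Suc k)}) = {e 1..<e (Suc n)} - e ` {1..n}"
    using Suc monotone_on_subset[OF Suc.prems] by auto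
  have below: "\<forall>i\<in>{1..n}. e i < e (Suc n)" "e 1 \<le> e (Suc n)" "e (Suc n) < e (Suc (Suc n))"
    using strict_mono_onD[OF Suc.prems] strict_mono_on_leD[OF Suc.prems] by auto
  have ins: "{1..Suc n} = insert (Suc n) {1..n}" by auto
  have "(\<Union>k\<in>{1..Suc n}. {e k<..<e (Suc k)})
      = {e (Suc n)<..<e (Suc (Suc n))} \<union> ({e 1..<e (Suc n)} - e ` {1..n})"
    by (simp only: ins UN_insert IH)
  also have "\<dots> = {e 1..<e (Suc (Suc n))} - e ` {1..Suc n}"
    using below unfolding ins image_insert by fastforce
  finally show ?case .
qed

lemma disjoint_family_on_gaps_strict_mono_on:
  fixes e :: "nat \<Rightarrow> nat"
  assumes "strict_mono_on {1..Suc n} e"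
  shows "disjoint_family_on (\<lambda>k. {e k<..<e (Suc k)}) {1..n}"
  unfolding disjoint_family_on_def
proof (intro ballI impI)
  have gap_before: "{e k<..<e (Suc k)} \<inter> {e k'<..<e (Suc k')} = {}"
    if "k < k'" "k \<in> {1..n}" "k' \<in> {1..n}" for k k'
    using that strict_mono_on_leD[OF assms, of "Suc k" k'] by auto
  fix k k' assume "k \<in> {1..n}" "k' \<in> {1..n}" "k \<noteq> k'"
  then show "{e k<..<e (Suc k)} \<inter> {e k'<..<e (Suc k')} = {}"
    using gap_before[of k k'] gap_before[of k' k] by (cases "k < k'") auto
qed

section \<open>Subsets of a finite set\<close>

lemma card_subsets_containing:
  assumes "finite A" "a \<in> A" "1 \<le> n"
  shows "card {T. T \<subseteq> A \<and> a \<in> T \<and> card T = n} = (card A - 1) choose (n - 1)"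
proof -
  have "{T. T \<subseteq> A \<and> a \<in> T \<and> card T = n}
      = insert a ` {S. S \<subseteq> A - {a} \<and> card S = n - 1}"
  proof (intro set_eqI iffI)
    fix T assume T: "T \<in> {T. T \<subseteq> A \<and> a \<in> T \<and> card T = n}"
    then have "T - {a} \<in> {S. S \<subseteq> A - {a} \<and> card S = n - 1}"
      using finite_subset[OF _ assms(1)] by auto
    then show "T \<in> insert a ` {S. S \<subseteq> A - {a} \<and> card S = n - 1}"
      using T by (auto intro!: image_eqI[of _ _ "T - {a}"])
  next
    fix T assume "T \<in> insert a ` {S. S \<subseteq> A - {a} \<and> card S = n - 1}"
    then obtain S where S: "T = insert a S" "S \<subseteq> A - {a}" "card S = n - 1" by blast
    moreover have "finite S" "a \<notin> S" using S(2) assms(1) finite_subset by blast+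
    ultimately show "T \<in> {T. T \<subseteq> A \<and> a \<in> T \<and> card T = n}"
      using assms by auto
  qed
  moreover have "inj_on (insert a) {S. S \<subseteq> A - {a} \<and> card S = n - 1}"
    by (rule inj_onI) blast
  ultimately show ?thesis
    using assms by (simp add: card_image n_subsets)
qed

lemma sum_prod_subsets_card_minus_one:
  assumes "finite A" "A \<noteq> {}"
  shows "(\<Sum>S\<in>{S. S \<subseteq> A \<and> card S = card A - 1}. prod f S)
         = (\<Sum>i\<in>A. prod f (A - {i}))"
proof (rule sum.reindex_cong)
  show "inj_on (\<lambda>i. A - {i}) A" by (rule inj_onI) blast
  show "{S. S \<subseteq> A \<and> card S = card A - 1} = (\<lambda>i. A - {i}) ` A"
  proof (intro set_eqI iffI)
    fix S assume S: "S \<in> {S. S \<subseteq> A \<and> card S = card A - 1}"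
    moreover have "finite S" using S assms(1) finite_subset by blast
    ultimately have "card (A - S) = 1"
      using assms by (simp add: card_Diff_subset card_gt_0_iff Suc_leI)
    then obtain i where "A - S = {i}" by (rule card_1_singletonE)
    then show "S \<in> (\<lambda>i. A - {i}) ` A" using S by blast
  qed (use assms in auto)
qed simp

section \<open>Cyclic intervals\<close>

lemma cdist_eq:
  assumes "a \<in> {1..L}" "j \<in> {1..L}"
  shows "cdist L a j = (if a \<le> j then int j - int a else int j - int a + int L)"
proof (cases "a \<le> j")
  case True
  then show ?thesis unfolding cdist_def using assms by (simp add: mod_pos_pos_trivial)
next
  case False
  have "(int j - int a) mod int L = (int j - int a + int L) mod int L" by simp
  also have "\<dots> = int j - int a + int L" using assms False by (intro mod_pos_pos_trivial) auto
  finally show ?thesis unfolding cdist_def using False by simp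
qed

lemma cyc_between_less:
  assumes "a \<in> {1..L}" "c \<in> {1..L}" "a < c"
  shows "cyc_between L a c = {a<..<c}"
  using assms cdist_eq[OF assms(1)] unfolding cyc_between_def by (auto split: if_splits)

lemma cyc_between_wrap:
  assumes "a \<in> {1..L}" "c \<in> {1..L}" "c \<le> a"
  shows "cyc_between L a c = {a<..L} \<union> {1..<c}"
  using assms cdist_eq[OF assms(1)] unfolding cyc_between_def by (auto split: if_splits)

section \<open>Bullet positions of a word\<close>

definition bullets :: "nat \<Rightarrow> (nat \<Rightarrow> letter) \<Rightarrow> nat set" where
  "bullets L w = {j \<in> {1..L}. \<exists>k. w j = Bullet k}"

lemma bpos_eqI:
  assumes "{j \<in> {1..L}. w j = Bullet k} = {b}"
  shows "bpos L w k = b"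
  unfolding bpos_def using assms by blast

lemma Bullet_positions_Omega:
  assumes "w \<in> Omega L n" "k \<in> {1..n}"
  shows "{j \<in> {1..L}. w j = Bullet k} = {bpos L w k}"
proof -
  have "card {j \<in> {1..L}. w j = Bullet k} = 1" using assms unfolding Omega_def by auto
  then obtain b where b: "{j \<in> {1..L}. w j = Bullet k} = {b}" by (rule card_1_singletonE)
  then show ?thesis using bpos_eqI[OF b] by simp
qed

lemma bpos_Omega:
  assumes "w \<in> Omega L n" "k \<in> {1..n}"
  shows "bpos L w k \<in> {1..L}" "w (bpos L w k) = Bullet k"
  using Bullet_positions_Omega[OF assms] by blast+

lemma nxt_less: "1 \<le> k \<Longrightarrow> k < n \<Longrightarrow> nxt n k = Suc k"
  and nxt_self: "nxt n n = 1"
  unfolding nxt_def by auto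

lemma cyc_ordered_iff_strict_mono_on:
  assumes first: "bpos L w 1 = 1" and pos: "\<And>k. k \<in> {1..n} \<Longrightarrow> 1 \<le> bpos L w k"
  shows "cyc_ordered L n w \<longleftrightarrow> strict_mono_on {1..n} (bpos L w)"
proof -
  define D where "D = {k \<in> {1..n}. bpos L w (nxt n k) \<le> bpos L w k}"
  have "D \<subseteq> {n} \<longleftrightarrow> strict_mono_on {1..n} (bpos L w)"
  proof
    assume "D \<subseteq> {n}"
    then show "strict_mono_on {1..n} (bpos L w)"
      by (intro strict_mono_on_atLeastAtMost_SucI) (force simp: D_def nxt_less)
  next
    assume mono: "strict_mono_on {1..n} (bpos L w)"
    show "D \<subseteq> {n}"
    proof
      fix k assume "k \<in> D"
      then have "k \<in> {1..n}" "\<not> k < n"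
        using strict_mono_onD[OF mono, of k "Suc k"] by (auto simp: D_def nxt_less)
      then show "k \<in> {n}" by simp
    qed
  qed
  moreover have "card D \<le> 1 \<longleftrightarrow> D \<subseteq> {n}"
  proof
    assume "card D \<le> 1"
    \<comment> \<open>since b_1 = 1, the wrap-around step from n to 1 is always the one allowed descent\<close>
    moreover have "n \<in> D" if "1 \<le> n"
      using that first pos[of n] by (simp add: D_def nxt_self)
    ultimately show "D \<subseteq> {n}"
      by (cases "1 \<le> n") (auto simp: D_def card_le_Suc0_iff_eq)
  qed (auto dest: card_mono[rotated])
  ultimately show ?thesis unfolding cyc_ordered_def D_def by simp
qed

lemma bpos_first_Omega:
  assumes w: "w \<in> Omega L n" and w1: "w 1 = Bullet 1" and n: "1 \<le> n"
  shows "bpos L w 1 = 1"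
proof -
  have "{j \<in> {1..L}. w j = Bullet 1} = {bpos L w 1}"
    using Bullet_positions_Omega[OF w, of 1] n by simp
  moreover have "1 \<in> {j \<in> {1..L}. w j = Bullet 1}" using bpos_Omega(1)[OF w, of 1] n w1 by auto
  ultimately show ?thesis by (metis singletonD)
qed

lemma strict_mono_on_bpos:
  assumes w: "w \<in> Omega L n" and w1: "w 1 = Bullet 1" and n: "1 \<le> n"
  shows "strict_mono_on {1..n} (bpos L w)"
proof -
  have "cyc_ordered L n w" using w unfolding Omega_def by blast
  then show ?thesis
    using cyc_ordered_iff_strict_mono_on bpos_first_Omega[OF assms] bpos_Omega(1)[OF w] by auto
qed

lemma bullets_Omega:
  assumes "w \<in> Omega L n"
  shows "bullets L w = bpos L w ` {1..n}"
proof -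
  have "k \<in> {1..n}" if "j \<in> {1..L}" "w j = Bullet k" for j k
    using assms that unfolding Omega_def letters_def by (force simp: PiE_iff)
  then show ?thesis
    using Bullet_positions_Omega[OF assms] unfolding bullets_def by blast
qed

lemma Box_Omega:
  assumes "w \<in> Omega L n" "j \<in> {1..L} - bullets L w"
  shows "w j = Box (boxlabel (w j))" "boxlabel (w j) \<in> {1..n}"
proof -
  have "w j \<in> Box ` {1..n}"
    using assms unfolding Omega_def letters_def bullets_def by (auto simp: PiE_iff)
  then show "w j = Box (boxlabel (w j))" "boxlabel (w j) \<in> {1..n}" by auto
qed

text \<open>A virtual bullet n+1 at position L+1 turns every block C_k, including the last one,
  which wraps around to position 1, into the gap between two consecutive positions.\<close>

lemma Cset_Omega:
  assumes w: "w \<in> Omega L n" and w1: "w 1 = Bullet 1" and n: "1 \<le> n"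
  defines "e \<equiv> (bpos L w)(Suc n := Suc L)"
  shows "strict_mono_on {1..Suc n} e"
    and "\<And>k. k \<in> {1..n} \<Longrightarrow> Cset L n w k = {e k<..<e (Suc k)}"
proof -
  have mono: "strict_mono_on {1..n} (bpos L w)" by (rule strict_mono_on_bpos[OF w w1 n])
  have pos: "\<And>k. k \<in> {1..n} \<Longrightarrow> bpos L w k \<in> {1..L}" using bpos_Omega(1)[OF w] .
  show "strict_mono_on {1..Suc n} e"
    using strict_mono_onD[OF mono] pos by (auto simp: e_def strict_mono_on_def le_Suc_eq less_Suc_eq_le)
  fix k assume k: "k \<in> {1..n}"
  have first: "bpos L w 1 = 1" by (rule bpos_first_Omega[OF w w1 n])
  show "Cset L n w k = {e k<..<e (Suc k)}"
  proof (cases "k < n")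
    case True
    then show ?thesis
      using k pos[of k] pos[of "Suc k"] strict_mono_onD[OF mono, of k "Suc k"]
      by (simp add: Cset_def e_def nxt_less cyc_between_less)
  next
    case False
    then have "k = n" using k by simp
    then show ?thesis
      using k pos[of k] first n by (auto simp: Cset_def e_def nxt_self cyc_between_wrap)
  qed
qed

lemma UN_Cset_Omega:
  assumes w: "w \<in> Omega L n" and w1: "w 1 = Bullet 1" and n: "1 \<le> n"
  shows "(\<Union>k\<in>{1..n}. Cset L n w k) = {1..L} - bullets L w"
    and "disjoint_family_on (Cset L n w) {1..n}"
proof -
  define e where "e = (bpos L w)(Suc n := Suc L)"
  note mono = Cset_Omega(1)[OF w w1 n, folded e_def]
  note gaps = Cset_Omega(2)[OF w w1 n, folded e_def]
  have "e 1 = 1" using bpos_first_Omega[OF w w1 n] n by (simp add: e_def)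
  moreover have "e ` {1..n} = bpos L w ` {1..n}" by (auto simp: e_def)
  ultimately show "(\<Union>k\<in>{1..n}. Cset L n w k) = {1..L} - bullets L w"
    using UN_gaps_strict_mono_on[OF mono] gaps bullets_Omega[OF w]
    by (simp add: e_def atLeastLessThanSuc_atLeastAtMost)
  show "disjoint_family_on (Cset L n w) {1..n}"
    using disjoint_family_on_gaps_strict_mono_on[OF mono] gaps
    by (simp add: disjoint_family_on_def)
qed

lemma wbox_q_eq_p:
  assumes pq: "\<forall>i\<in>{1..n}. q i = p i" and i: "i \<in> {1..n}" and k: "k \<in> {1..n}"
  shows "wbox p q n i k = (\<Prod>j\<in>{1..n} - {i}. p j)"
proof -
  have q: "prod q A = prod p A" if "A \<subseteq> {1..n}" for A
    using that pq by (intro prod.cong) auto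
  have "wbox p q n i k = wbox p p n i k"
    unfolding wbox_def using k by (simp add: q subset_eq)
  also have "\<dots> = (\<Prod>j\<in>{1..n} - {i}. p j)"
  proof (cases "i \<le> k")
    case True
    have "{1..n} - {i} = {1..<i} \<union> {i<..k} \<union> {k<..n}" using True i k by auto
    moreover have "prod p ({1..<i} \<union> {i<..k} \<union> {k<..n})
        = prod p {1..<i} * prod p {i<..k} * prod p {k<..n}"
      using True by (subst prod.union_disjoint; auto)+
    ultimately show ?thesis using True by (simp add: wbox_def)
  next
    case False
    have "{1..n} - {i} = {1..k} \<union> {k<..<i} \<union> {i<..n}" using False i k by auto
    moreover have "prod p ({1..k} \<union> {k<..<i} \<union> {i<..n})
        = prod p {1..k} * prod p {k<..<i} * prod p {i<..n}"
      using False by (subst prod.union_disjoint; auto)+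
    ultimately show ?thesis using False by (simp add: wbox_def)
  qed
  finally show ?thesis .
qed

lemma wt_q_eq_p:
  assumes w: "w \<in> Omega L n" and w1: "w 1 = Bullet 1" and n: "1 \<le> n"
    and pq: "\<forall>i\<in>{1..n}. q i = p i"
  shows "wt L n p q w = (\<Prod>j\<in>{1..L} - bullets L w. \<Prod>i\<in>{1..n} - {boxlabel (w j)}. p i)"
proof -
  note UN = UN_Cset_Omega[OF w w1 n]
  have "wt L n p q w = (\<Prod>k\<in>{1..n}. \<Prod>j\<in>Cset L n w k. \<Prod>i\<in>{1..n} - {boxlabel (w j)}. p i)"
    unfolding wt_def
  proof (intro prod.cong refl)
    fix k j assume k: "k \<in> {1..n}" and "j \<in> Cset L n w k"
    then have "j \<in> {1..L} - bullets L w" using UN(1) by blast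
    then show "wbox p q n (boxlabel (w j)) k = (\<Prod>i\<in>{1..n} - {boxlabel (w j)}. p i)"
      using wbox_q_eq_p[OF pq Box_Omega(2)[OF w] k] by blast
  qed
  also have "\<dots> = (\<Prod>j\<in>(\<Union>k\<in>{1..n}. Cset L n w k). \<Prod>i\<in>{1..n} - {boxlabel (w j)}. p i)"
  proof (rule prod.UNION_disjoint_family[symmetric, OF _ _ UN(2)])
    show "\<forall>k\<in>{1..n}. finite (Cset L n w k)" by (simp add: Cset_def cyc_between_def)
  qed simp
  finally show ?thesis unfolding UN(1) .
qed

section \<open>Words from bullet sets and box labels\<close>

definition word_of :: "nat \<Rightarrow> nat set \<Rightarrow> (nat \<Rightarrow> nat) \<Rightarrow> nat \<Rightarrow> letter" where
  "word_of L T lab j =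
     (if j \<in> {1..L} then if j \<in> T then Bullet (rank T j) else Box (lab j) else undefined)"

lemma Bullet_positions_word_of:
  assumes e: "strict_mono_on {1..n} e" and T: "T = e ` {1..n}" "T \<subseteq> {1..L}"
    and k: "k \<in> {1..n}"
  shows "{j \<in> {1..L}. word_of L T lab j = Bullet k} = {e k}"
proof -
  have "j \<in> T \<and> rank T j = k \<longleftrightarrow> j = e k" for j
    using T(1) rank_strict_mono_on_image[OF e] k by auto
  then show ?thesis using T(2) by (auto simp: word_of_def)
qed

lemma cyc_ordered_word_of:
  assumes e: "strict_mono_on {1..n} e" and T: "T = e ` {1..n}" "T \<subseteq> {1..L}" "1 \<in> T"
  shows "cyc_ordered L n (word_of L T lab)"
proof -
  have bpos: "bpos L (word_of L T lab) k = e k" if "k \<in> {1..n}" for k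
    using Bullet_positions_word_of[OF e T(1,2) that] by (rule bpos_eqI)
  obtain i where i: "i \<in> {1..n}" "e i = 1" using T(1,3) by auto
  then have "e 1 \<le> 1" using strict_mono_on_leD[OF e, of 1 i] by auto
  moreover have "1 \<le> e k" if "k \<in> {1..n}" for k
    using T(2) imageI[OF that, of e, folded T(1)] by auto
  ultimately have "bpos L (word_of L T lab) 1 = 1" using i bpos[of 1] by fastforce
  moreover have "strict_mono_on {1..n} (bpos L (word_of L T lab))"
    using e bpos by (simp add: strict_mono_on_def)
  ultimately show ?thesis
    using cyc_ordered_iff_strict_mono_on bpos \<open>\<And>k. k \<in> {1..n} \<Longrightarrow> 1 \<le> e k\<close> by simp
qed

lemma word_of_in_Omega:
  assumes T: "T \<subseteq> {1..L}" "1 \<in> T" "card T = n"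
    and lab: "lab \<in> ({1..L} - T) \<rightarrow>\<^sub>E {1..n}"
  shows "word_of L T lab \<in> Omega L n" "word_of L T lab 1 = Bullet 1"
    "bullets L (word_of L T lab) = T"
proof -
  let ?w = "word_of L T lab"
  have "finite T" using T(1) finite_subset by blast
  then obtain e where e: "strict_mono_on {1..n} e" "T = e ` {1..n}"
    using obtain_strict_mono_on_enumeration T(3) by metis
  have rank: "rank T j \<in> {1..n}" if "j \<in> T" for j
    using that e rank_strict_mono_on_image[OF e(1)] by auto
  have "{x \<in> T. x \<le> 1} = {1}" using T by auto
  then have "rank T 1 = 1" by (simp add: rank_def)
  then show "?w 1 = Bullet 1" using T by (auto simp: word_of_def)
  have "?w \<in> {1..L} \<rightarrow>\<^sub>E letters n"
  proof (rule PiE_I)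
    fix j assume "j \<in> {1..L}"
    then show "?w j \<in> letters n"
      using PiE_mem[OF lab, of j] rank by (auto simp: word_of_def letters_def)
  qed (auto simp: word_of_def)
  then show "?w \<in> Omega L n"
    using Bullet_positions_word_of[OF e T(1)] cyc_ordered_word_of[OF e T(1,2)]
    unfolding Omega_def by simp
  show "bullets L ?w = T" using T(1) by (auto simp: bullets_def word_of_def)
qed

lemma word_of_bullets_Omega:
  assumes w: "w \<in> Omega L n" and w1: "w 1 = Bullet 1" and n: "1 \<le> n"
  shows "word_of L (bullets L w) (restrict (\<lambda>j. boxlabel (w j)) ({1..L} - bullets L w)) = w"
proof
  fix j
  let ?lab = "restrict (\<lambda>j. boxlabel (w j)) ({1..L} - bullets L w)"
  consider "j \<notin> {1..L}" | "j \<in> {1..L} - bullets L w" | k where "k \<in> {1..n}" "j = bpos L w k"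
    using bullets_Omega[OF w] by blast
  then show "word_of L (bullets L w) ?lab j = w j"
  proof cases
    case 1
    have "w \<in> extensional {1..L}" using w unfolding Omega_def by (simp add: PiE_def)
    then have "w j = undefined" using 1 by (rule extensional_arb)
    then show ?thesis unfolding word_of_def by (simp only: if_not_P[OF 1])
  next
    case 2
    then show ?thesis by (simp add: word_of_def Box_Omega(1)[OF w 2, symmetric])
  next
    case 3
    have "rank (bpos L w ` {1..n}) (bpos L w k) = k"
      by (rule rank_strict_mono_on_image[OF strict_mono_on_bpos[OF w w1 n] 3(1)])
    then have "rank (bullets L w) j = k" using 3(2) bullets_Omega[OF w] by simp
    moreover have "j \<in> bullets L w" unfolding bullets_Omega[OF w] 3(2) using 3(1) by (rule imageI)
    moreover have "j \<in> {1..L}" "w j = Bullet k" unfolding 3(2) by (rule bpos_Omega[OF w 3(1)])+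
    ultimately show ?thesis by (simp add: word_of_def)
  qed
qed

lemma bullets_Omega_card:
  assumes w: "w \<in> Omega L n" and w1: "w 1 = Bullet 1" and n: "1 \<le> n"
  shows "bullets L w \<subseteq> {1..L}" "1 \<in> bullets L w" "card (bullets L w) = n"
proof -
  show "bullets L w \<subseteq> {1..L}" by (auto simp: bullets_def)
  show "1 \<in> bullets L w"
    using bpos_first_Omega[OF w w1 n] bpos_Omega(1)[OF w, of 1] w1 n by (auto simp: bullets_def)
  have "inj_on (bpos L w) {1..n}"
    by (rule strict_mono_on_imp_inj_on[OF strict_mono_on_bpos[OF w w1 n]])
  then show "card (bullets L w) = n" by (simp add: bullets_Omega[OF w] card_image)
qed

lemma word_of_Box:
  "j \<in> {1..L} - T \<Longrightarrow> word_of L T lab j = Box (lab j)"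
  by (simp add: word_of_def)

lemma bij_betw_word_of:
  assumes T: "T \<subseteq> {1..L}" "1 \<in> T" "card T = n"
  shows "bij_betw (word_of L T) (({1..L} - T) \<rightarrow>\<^sub>E {1..n})
           {w \<in> Omega L n. w 1 = Bullet 1 \<and> bullets L w = T}"
  unfolding bij_betw_def
proof
  let ?Lab = "({1..L} - T) \<rightarrow>\<^sub>E {1..n}"
  show "inj_on (word_of L T) ?Lab"
  proof (rule inj_onI)
    fix l l' assume l: "l \<in> ?Lab" "l' \<in> ?Lab" and eq: "word_of L T l = word_of L T l'"
    show "l = l'"
    proof (rule PiE_ext[OF l])
      fix j assume "j \<in> {1..L} - T"
      then show "l j = l' j" using fun_cong[OF eq, of j] by (simp add: word_of_Box)
    qed
  qed
  have "finite T" using T(1) finite_subset by blast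
  then have n: "1 \<le> n" using T(2,3) by (auto simp: card_gt_0_iff Suc_le_eq)
  have "w \<in> word_of L T ` ?Lab"
    if w: "w \<in> Omega L n" "w 1 = Bullet 1" and T_eq: "T = bullets L w" for w
  proof -
    have "restrict (\<lambda>j. boxlabel (w j)) ({1..L} - T) \<in> ?Lab"
      using Box_Omega(2)[OF w(1)] T_eq by auto
    then show ?thesis using word_of_bullets_Omega[OF w n] T_eq by (metis image_eqI)
  qed
  then show "word_of L T ` ?Lab = {w \<in> Omega L n. w 1 = Bullet 1 \<and> bullets L w = T}"
    using word_of_in_Omega[OF T] by blast
qed

lemma sum_fibre_bullets_Omega:
  fixes f :: "nat \<Rightarrow> 'a::comm_semiring_1"
  assumes T: "T \<subseteq> {1..L}" "1 \<in> T" "card T = n"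
  shows "(\<Sum>w\<in>{w \<in> Omega L n. w 1 = Bullet 1 \<and> bullets L w = T}.
               \<Prod>j\<in>{1..L} - T. f (boxlabel (w j)))
         = (\<Sum>i\<in>{1..n}. f i) ^ (L - n)"
proof -
  have "(\<Sum>w\<in>{w \<in> Omega L n. w 1 = Bullet 1 \<and> bullets L w = T}.
          \<Prod>j\<in>{1..L} - T. f (boxlabel (w j)))
      = (\<Sum>lab\<in>({1..L} - T) \<rightarrow>\<^sub>E {1..n}. \<Prod>j\<in>{1..L} - T. f (lab j))"
    by (rule sum.reindex_bij_betw[OF bij_betw_word_of[OF T], symmetric, THEN trans])
      (auto simp: word_of_Box intro!: sum.cong prod.cong)
  also have "\<dots> = (\<Prod>j\<in>{1..L} - T. \<Sum>i\<in>{1..n}. f i)"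
    using prod_sum_PiE[of "{1..L} - T" "\<lambda>_. {1..n}" "\<lambda>_ i. f i"] by simp
  also have "\<dots> = (\<Sum>i\<in>{1..n}. f i) ^ (L - n)"
    using T finite_subset[OF T(1)] by (simp add: card_Diff_subset)
  finally show ?thesis .
qed

theorem proposition4p10:
  fixes p q :: "nat \<Rightarrow> 'a::comm_ring_1" and L n :: nat
  assumes "1 \<le> n" and "n \<le> L"
    and "\<forall>i\<in>{1..n}. q i = p i"
  shows "Zres L n p q = of_nat ((L - 1) choose (n - 1)) * esym (n - 1) p n ^ (L - n)"
proof -
  let ?O = "{w \<in> Omega L n. w 1 = Bullet 1}"
  let ?TT = "{T. T \<subseteq> {1..L} \<and> 1 \<in> T \<and> card T = n}"
  let ?g = "\<lambda>i. \<Prod>j\<in>{1..n} - {i}. p j"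
  let ?F = "\<lambda>w. \<Prod>j\<in>{1..L} - bullets L w. ?g (boxlabel (w j))"
  have "finite ?O"
    by (rule finite_subset[of _ "{1..L} \<rightarrow>\<^sub>E letters n"])
      (auto simp: Omega_def letters_def intro: finite_PiE)
  moreover have "finite ?TT" by (rule finite_subset[of _ "Pow {1..L}"]) auto
  moreover have "bullets L ` ?O \<subseteq> ?TT" using bullets_Omega_card assms(1) by blast
  ultimately have "(\<Sum>w\<in>?O. ?F w) = (\<Sum>T\<in>?TT. \<Sum>w\<in>{w \<in> ?O. bullets L w = T}. ?F w)"
    by (rule sum.group[symmetric])
  also have "\<dots> = (\<Sum>T\<in>?TT. (\<Sum>i\<in>{1..n}. ?g i) ^ (L - n))"
    using sum_fibre_bullets_Omega[of _ L n ?g] by (intro sum.cong) (simp_all add: conj_assoc)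
  finally have "Zres L n p q = of_nat (card ?TT) * (\<Sum>i\<in>{1..n}. ?g i) ^ (L - n)"
    unfolding Zres_def using wt_q_eq_p[OF _ _ assms(1,3)] by simp
  moreover have "esym (n - 1) p n = (\<Sum>i\<in>{1..n}. ?g i)"
    using sum_prod_subsets_card_minus_one[of "{1..n}" p] assms(1) by (simp add: esym_def)
  moreover have "card ?TT = (L - 1) choose (n - 1)"
    using card_subsets_containing[of "{1..L}" 1 n] assms by simp
  ultimately show ?thesis by simp
qed

end
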